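(* Let $R$ be a commutative ring and let $(A,d)$ be an acyclic differential graded $R$-algebra. Let $\bar I\subseteq\bar J$ be graded ideals of the graded algebra $\ker(d)$. If $\bar I\neq\bar J$, then $A\cdot\bar I\neq A\cdot\bar J$.
   Context: A differential graded (dg) $R$-algebra $(A,d)$ is a $\mathbb{Z}$-graded $R$-algebra $A$ with an $R$-linear endomorphism $d$, homogeneous of degree $1$, with $d^2=0$ and $d(ab)=d(a)b+(-1)^{|a|}a\,d(b)$ for homogeneous $a,b$. It is acyclic if its homology vanishes, i.e. $\ker(d)=\operatorname{im}(d)$. The set $\ker(d)$ is a graded subalgebra of $A$; $A\cdot\bar I$ denotes the left ideal of $A$ generated by $\bar I$. *)

theory Defs
  imports Main
begin

text \<open>The algebra is the whole type 'a
(a unital associative ring), the scalar action of the commutative ring 'r is smult,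
and the grading is given by the family of additive subgroups G n (n :: int),
with 'a the internal direct sum of the G n.\<close>

definition is_direct_sum_grading :: "(int \<Rightarrow> 'a::ab_group_add set) \<Rightarrow> bool" where
  "is_direct_sum_grading G \<longleftrightarrow>
     (\<forall>n. 0 \<in> G n \<and> (\<forall>x\<in>G n. \<forall>y\<in>G n. x + y \<in> G n \<and> - x \<in> G n)) \<and>
     (\<forall>x. \<exists>!c :: int \<Rightarrow> 'a. finite {n. c n \<noteq> 0} \<and> (\<forall>n. c n \<in> G n) \<and>
            x = (\<Sum>n\<in>{n. c n \<noteq> 0}. c n))"

definition hcomp :: "(int \<Rightarrow> 'a::ab_group_add set) \<Rightarrow> int \<Rightarrow> 'a \<Rightarrow> 'a" where
  "hcomp G n x = (THE c :: int \<Rightarrow> 'a. finite {n. c n \<noteq> 0} \<and> (\<forall>n. c n \<in> G n) \<and>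
            x = (\<Sum>n\<in>{n. c n \<noteq> 0}. c n)) n"

definition is_algebra :: "('r::comm_ring_1 \<Rightarrow> 'a::{ring,monoid_mult} \<Rightarrow> 'a) \<Rightarrow> bool" where
  "is_algebra smult \<longleftrightarrow>
     (\<forall>r x y. smult r (x + y) = smult r x + smult r y) \<and>
     (\<forall>r s x. smult (r + s) x = smult r x + smult s x) \<and>
     (\<forall>r s x. smult (r * s) x = smult r (smult s x)) \<and>
     (\<forall>x. smult 1 x = x) \<and>
     (\<forall>r x y. smult r (x * y) = smult r x * y \<and> smult r (x * y) = x * smult r y)"

definition graded_algebra ::
    "('r::comm_ring_1 \<Rightarrow> 'a::{ring,monoid_mult} \<Rightarrow> 'a) \<Rightarrow> (int \<Rightarrow> 'a set) \<Rightarrow> bool" where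
  "graded_algebra smult G \<longleftrightarrow>
     is_algebra smult \<and> is_direct_sum_grading G \<and>
     (\<forall>n r x. x \<in> G n \<longrightarrow> smult r x \<in> G n) \<and>
     (\<forall>m n x y. x \<in> G m \<longrightarrow> y \<in> G n \<longrightarrow> x * y \<in> G (m + n)) \<and>
     1 \<in> G 0"

definition dg_algebra ::
    "('r::comm_ring_1 \<Rightarrow> 'a::{ring,monoid_mult} \<Rightarrow> 'a) \<Rightarrow> (int \<Rightarrow> 'a set) \<Rightarrow> ('a \<Rightarrow> 'a) \<Rightarrow> bool" where
  "dg_algebra smult G d \<longleftrightarrow>
     graded_algebra smult G \<and>
     (\<forall>x y. d (x + y) = d x + d y) \<and>
     (\<forall>r x. d (smult r x) = smult r (d x)) \<and>
     (\<forall>n x. x \<in> G n \<longrightarrow> d x \<in> G (n + 1)) \<and>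
     (\<forall>x. d (d x) = 0) \<and>
     (\<forall>m n a b. a \<in> G m \<longrightarrow> b \<in> G n \<longrightarrow>
        d (a * b) = d a * b + (-1) ^ nat \<bar>m\<bar> * a * d b)"

definition acyclic :: "('a::ring \<Rightarrow> 'a) \<Rightarrow> bool" where
  "acyclic d \<longleftrightarrow> {x. d x = 0} = range d"

definition ideal_of :: "'a::{ring,monoid_mult} set \<Rightarrow> 'a set \<Rightarrow> bool" where
  "ideal_of S I \<longleftrightarrow> I \<subseteq> S \<and> 0 \<in> I \<and>
     (\<forall>x\<in>I. \<forall>y\<in>I. x + y \<in> I \<and> - x \<in> I) \<and>
     (\<forall>s\<in>S. \<forall>x\<in>I. s * x \<in> I \<and> x * s \<in> I)"

definition graded_ideal_of_ker ::
    "(int \<Rightarrow> 'a::{ring,monoid_mult} set) \<Rightarrow> ('a \<Rightarrow> 'a) \<Rightarrow> 'a set \<Rightarrow> bool" where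
  "graded_ideal_of_ker G d I \<longleftrightarrow>
     ideal_of {x. d x = 0} I \<and> (\<forall>x\<in>I. \<forall>n. hcomp G n x \<in> I)"

definition left_ideal_gen :: "'a::{ring,monoid_mult} set \<Rightarrow> 'a set" where
  "left_ideal_gen I = {x. \<exists>ps :: ('a \<times> 'a) list. set (map snd ps) \<subseteq> I \<and>
                         x = sum_list (map (\<lambda>(a, i). a * i) ps)}"

end

theory Submission
  imports Defs HOL.Modules
begin

text \<open>The unit is a cycle, hence a boundary: \<open>1 = d h\<close>. Since \<open>d (a * i) = d a * i\<close>
for every cycle \<open>i\<close>, the differential maps \<open>A \<cdot> I\<close> into \<open>I\<close>, and every cycle \<open>x\<close> of
\<open>A \<cdot> I\<close> satisfies \<open>x = d h * x = d (h * x) \<in> I\<close>. Thus \<open>A \<cdot> I \<inter> ker d = I\<close>, so \<open>I\<close> is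
recovered from \<open>A \<cdot> I\<close>.\<close>

lemma hcomp_decomposition:
  assumes "is_direct_sum_grading G"
  shows "hcomp G n x \<in> G n" and "x = (\<Sum>n\<in>{n. hcomp G n x \<noteq> 0}. hcomp G n x)"
proof -
  let ?P = "\<lambda>c :: int \<Rightarrow> _. finite {n. c n \<noteq> 0} \<and> (\<forall>n. c n \<in> G n) \<and>
            x = (\<Sum>n\<in>{n. c n \<noteq> 0}. c n)"
  have "\<exists>!c. ?P c" using assms unfolding is_direct_sum_grading_def by blast
  then have "?P (\<lambda>n. hcomp G n x)" unfolding hcomp_def by (rule theI')
  then show "hcomp G n x \<in> G n" and "x = (\<Sum>n\<in>{n. hcomp G n x \<noteq> 0}. hcomp G n x)"
    by simp_all
qed

lemma dg_algebra_additive: "dg_algebra smult G d \<Longrightarrow> additive d"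
  unfolding dg_algebra_def additive_def by blast

lemma dg_algebra_diff_diff: "dg_algebra smult G d \<Longrightarrow> d (d x) = 0"
  unfolding dg_algebra_def by blast

lemma dg_algebra_diff_mult_homogeneous:
  "dg_algebra smult G d \<Longrightarrow> a \<in> G m \<Longrightarrow> b \<in> G n \<Longrightarrow>
    d (a * b) = d a * b + (-1) ^ nat \<bar>m\<bar> * a * d b"
  unfolding dg_algebra_def by blast

lemma dg_algebra_grading: "dg_algebra smult G d \<Longrightarrow> is_direct_sum_grading G"
  unfolding dg_algebra_def graded_algebra_def by blast

lemma dg_algebra_diff_mult_homogeneous_left:
  assumes dg: "dg_algebra smult G d" and a: "a \<in> G m"
  shows "d (a * b) = d a * b + (-1) ^ nat \<bar>m\<bar> * a * d b"
proof -
  interpret additive d using dg by (rule dg_algebra_additive)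
  note grading = dg_algebra_grading[OF dg]
  define T where "T = {n. hcomp G n b \<noteq> 0}"
  have b: "b = (\<Sum>n\<in>T. hcomp G n b)"
    unfolding T_def by (rule hcomp_decomposition(2)[OF grading])
  have "d (a * b) = (\<Sum>n\<in>T. d (a * hcomp G n b))"
    by (subst b) (simp add: sum_distrib_left sum)
  also have "\<dots> = (\<Sum>n\<in>T. d a * hcomp G n b + (-1) ^ nat \<bar>m\<bar> * a * d (hcomp G n b))"
    using dg_algebra_diff_mult_homogeneous[OF dg a hcomp_decomposition(1)[OF grading]] by simp
  also have "\<dots> = d a * b + (-1) ^ nat \<bar>m\<bar> * a * d b"
    by (simp only: sum.distrib sum_distrib_left[symmetric] sum[symmetric] b[symmetric])
  finally show ?thesis .
qed

lemma dg_algebra_diff_mult_cycle: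
  assumes dg: "dg_algebra smult G d" and "d b = 0"
  shows "d (a * b) = d a * b"
proof -
  interpret additive d using dg by (rule dg_algebra_additive)
  note grading = dg_algebra_grading[OF dg]
  define S where "S = {m. hcomp G m a \<noteq> 0}"
  have a: "a = (\<Sum>m\<in>S. hcomp G m a)"
    unfolding S_def by (rule hcomp_decomposition(2)[OF grading])
  have "d (a * b) = (\<Sum>m\<in>S. d (hcomp G m a * b))"
    by (subst a) (simp add: sum_distrib_right sum)
  also have "\<dots> = (\<Sum>m\<in>S. d (hcomp G m a) * b)"
    using dg_algebra_diff_mult_homogeneous_left[OF dg hcomp_decomposition(1)[OF grading]]
    by (simp add: \<open>d b = 0\<close>)
  also have "\<dots> = d a * b"
    by (simp only: sum_distrib_right[symmetric] sum[symmetric] a[symmetric])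
  finally show ?thesis .
qed

lemma dg_algebra_diff_one:
  assumes dg: "dg_algebra smult G d"
  shows "d 1 = 0"
proof -
  have "1 \<in> G 0" using dg unfolding dg_algebra_def graded_algebra_def by blast
  then have "d 1 = d 1 + d 1"
    using dg_algebra_diff_mult_homogeneous_left[OF dg, of 1 0 1] by simp
  then show ?thesis by simp
qed

lemma acyclic_one_boundary:
  "dg_algebra smult G d \<Longrightarrow> acyclic d \<Longrightarrow> \<exists>h. d h = 1"
  using dg_algebra_diff_one unfolding acyclic_def by (metis (mono_tags) mem_Collect_eq rangeE)

lemma subset_left_ideal_gen: "I \<subseteq> left_ideal_gen I"
proof
  fix i assume "i \<in> I"
  then show "i \<in> left_ideal_gen I"
    unfolding left_ideal_gen_def by (auto intro!: exI[of _ "[(1, i)]"])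
qed

lemma left_ideal_gen_mult_left:
  assumes "x \<in> left_ideal_gen I"
  shows "y * x \<in> left_ideal_gen I"
proof -
  obtain ps where ps: "set (map snd ps) \<subseteq> I" "x = (\<Sum>(a, i)\<leftarrow>ps. a * i)"
    using assms unfolding left_ideal_gen_def by blast
  let ?qs = "map (\<lambda>(a, i). (y * a, i)) ps"
  have "set (map snd ?qs) \<subseteq> I" using ps(1) by auto
  moreover have "y * x = (\<Sum>(a, i)\<leftarrow>?qs. a * i)"
    unfolding ps(2) sum_list_const_mult[symmetric]
    by (simp add: o_def case_prod_beta mult.assoc)
  ultimately show ?thesis unfolding left_ideal_gen_def by blast
qed

lemma diff_left_ideal_gen:
  assumes dg: "dg_algebra smult G d" and I: "ideal_of {x. d x = 0} I"
    and "x \<in> left_ideal_gen I"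
  shows "d x \<in> I"
proof -
  interpret additive d using dg by (rule dg_algebra_additive)
  obtain ps where "set (map snd ps) \<subseteq> I" "x = (\<Sum>(a, i)\<leftarrow>ps. a * i)"
    using assms(3) unfolding left_ideal_gen_def by blast
  moreover have "d (\<Sum>(a, i)\<leftarrow>ps. a * i) \<in> I" if "set (map snd ps) \<subseteq> I" for ps
    using that
  proof (induction ps)
    case Nil
    then show ?case using I unfolding ideal_of_def by (simp add: zero)
  next
    case (Cons p ps)
    obtain a i where p: "p = (a, i)" by fastforce
    with Cons.prems have "i \<in> I" by simp
    with I have "d (a * i) = d a * i" and "d a * i \<in> I"
      unfolding ideal_of_def
      by (auto simp: dg_algebra_diff_mult_cycle[OF dg] dg_algebra_diff_diff[OF dg])
    with Cons I show ?case unfolding ideal_of_def by (simp add: p add)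
  qed
  ultimately show ?thesis by blast
qed

lemma left_ideal_gen_Int_cycles:
  assumes dg: "dg_algebra smult G d" and "acyclic d" and I: "ideal_of {x. d x = 0} I"
  shows "left_ideal_gen I \<inter> {x. d x = 0} = I"
proof (intro equalityI subsetI)
  fix x assume x: "x \<in> left_ideal_gen I \<inter> {x. d x = 0}"
  obtain h where "d h = 1" using acyclic_one_boundary[OF dg \<open>acyclic d\<close>] ..
  then have "x = d (h * x)" using x dg_algebra_diff_mult_cycle[OF dg] by simp
  also have "\<dots> \<in> I"
    using x by (intro diff_left_ideal_gen[OF dg I] left_ideal_gen_mult_left) simp
  finally show "x \<in> I" .
next
  fix x assume "x \<in> I"
  then show "x \<in> left_ideal_gen I \<inter> {x. d x = 0}"
    using subset_left_ideal_gen I unfolding ideal_of_def by blast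
qed

theorem lemma2p6:
  fixes smult :: "'r::comm_ring_1 \<Rightarrow> 'a::{ring,monoid_mult} \<Rightarrow> 'a"
    and G :: "int \<Rightarrow> 'a set"
    and d :: "'a \<Rightarrow> 'a"
    and I J :: "'a set"
  assumes "dg_algebra smult G d"
    and "acyclic d"
    and "graded_ideal_of_ker G d I"
    and "graded_ideal_of_ker G d J"
    and "I \<subseteq> J"
    and "I \<noteq> J"
  shows "left_ideal_gen I \<noteq> left_ideal_gen J"
proof
  assume "left_ideal_gen I = left_ideal_gen J"
  moreover have "ideal_of {x. d x = 0} I" and "ideal_of {x. d x = 0} J"
    using assms(3,4) unfolding graded_ideal_of_ker_def by blast+
  ultimately have "I = J"
    using left_ideal_gen_Int_cycles[OF assms(1,2)] by metis
  with \<open>I \<noteq> J\<close> show False ..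
qed

end
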